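(* Let $m>n>0$ be relatively prime integers with $(m,n)\neq(2,1)$, and $(r,s)\in\mathbb{Z}^2$. Then $(r,s)=\beta(m,n)$ if and only if $(-s,\,r+2s)=\beta(2m-n,\,m)$.
   Context: For relatively prime integers $a>b>0$, $\beta(a,b)$ denotes the Bézout coefficients given by the Euclidean algorithm: with $a=q_1b+r_1$, $b=q_2r_1+r_2$, $\dots$, $r_{k-2}=q_kr_{k-1}+r_k$, $r_{k-1}=1$, $r_k=0$ ($r_{-1}=a$, $r_0=b$), write $\begin{pmatrix}a\\ b\end{pmatrix}=M\begin{pmatrix}1\\0\end{pmatrix}$ with $M=\prod_{i=1}^k\begin{pmatrix}q_i&1\\1&0\end{pmatrix}$; then $\beta(a,b)$ is the first row of $M^{-1}$, and $\beta(a,b)=(r,s)$ satisfies $ra+sb=1$. *)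

theory Defs
  imports Main
begin

fun euclid_quots :: "nat \<Rightarrow> nat \<Rightarrow> nat list" where
  "euclid_quots a b = (if b = 0 then [] else (a div b) # euclid_quots b (a mod b))"

text \<open>2x2 integer matrices as tuples (a11, a12, a21, a22).\<close>
type_synonym mat2 = "int \<times> int \<times> int \<times> int"

definition mat2_mult :: "mat2 \<Rightarrow> mat2 \<Rightarrow> mat2" where
  "mat2_mult A B = (case A of (a, b, c, d) \<Rightarrow> case B of (e, f, g, h) \<Rightarrow>
     (a*e + b*g, a*f + b*h, c*e + d*g, c*f + d*h))"

definition mat2_id :: mat2 where "mat2_id = (1, 0, 0, 1)"

definition mat2_det :: "mat2 \<Rightarrow> int" where
  "mat2_det A = (case A of (a, b, c, d) \<Rightarrow> a*d - b*c)"

text \<open>Inverse of a unimodular integer matrix (det = +-1): adjugate divided by det.\<close>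
definition mat2_inv :: "mat2 \<Rightarrow> mat2" where
  "mat2_inv A = (case A of (a, b, c, d) \<Rightarrow>
     (d div mat2_det A, (-b) div mat2_det A, (-c) div mat2_det A, a div mat2_det A))"

definition euclid_matrix :: "nat \<Rightarrow> nat \<Rightarrow> mat2" where
  "euclid_matrix a b = foldr (\<lambda>q M. mat2_mult (int q, 1, 1, 0) M) (euclid_quots a b) mat2_id"

definition beta :: "int \<Rightarrow> int \<Rightarrow> int \<times> int" where
  "beta a b = (case mat2_inv (euclid_matrix (nat a) (nat b)) of (x, y, _, _) \<Rightarrow> (x, y))"

end

theory Submission
  imports Defs
begin

text \<open>Idea: for coprime \<open>m > n > 0\<close> with \<open>(m, n) \<noteq> (2, 1)\<close>, \<open>\<beta>(m, n)\<close> is the unique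
  solution \<open>(r, s)\<close> of \<open>r m + s n = 1\<close> with \<open>2 \<bar>s\<bar> < m\<close>: the Euclidean matrix is
  \<open>[[m, x], [n, y]]\<close> with \<open>0 \<le> 2y \<le> n\<close> and \<open>2x \<le> m\<close>, and its inverse has first row \<open>\<plusminus>(y, -x)\<close>.
  The substitution \<open>(r, s) \<mapsto> (-s, r + 2s)\<close> preserves the value of the Bezout form
  (\<open>-s(2m - n) + (r + 2s) m = r m + s n\<close>), and, given the Bezout identity, the size condition
  \<open>2 \<bar>s\<bar> < m\<close> is equivalent to \<open>2 \<bar>r + 2s\<bar> < 2m - n\<close> because \<open>m (r + 2s) = 1 + s (2m - n)\<close>.\<close>

lemma euclid_matrix_step:
  assumes "b \<noteq> 0"
  shows "euclid_matrix a b = mat2_mult (int (a div b), 1, 1, 0) (euclid_matrix b (a mod b))"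
  using assms unfolding euclid_matrix_def by (subst euclid_quots.simps) simp

lemma euclid_matrix_0: "euclid_matrix a 0 = mat2_id"
  unfolding euclid_matrix_def by (subst euclid_quots.simps) simp

lemma euclid_matrix_eq:
  assumes "0 < b" and "b < a" and "coprime a b"
  shows "\<exists>x y. euclid_matrix a b = (int a, x, int b, y) \<and> \<bar>int a * y - int b * x\<bar> = 1 \<and>
           1 \<le> x \<and> 0 \<le> y \<and> 2 * y \<le> int b \<and> 2 * x \<le> int a"
  using assms
proof (induction a b rule: euclid_quots.induct)
  case (1 a b)
  define q where "q = a div b"
  define c where "c = a mod b"
  have a_eq: "int a = int q * int b + int c"
    unfolding q_def c_def by (metis div_mult_mod_eq of_nat_add of_nat_mult)
  have q_ge_1: "1 \<le> q"
    unfolding q_def using "1.prems" by (simp add: Suc_le_eq div_greater_zero_iff)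
  have step: "euclid_matrix a b = mat2_mult (int q, 1, 1, 0) (euclid_matrix b c)"
    unfolding q_def c_def using euclid_matrix_step "1.prems" by simp
  show ?case
  proof (cases "c = 0")
    case True
    then have "b dvd a" unfolding c_def by auto
    with \<open>coprime a b\<close> have "b = 1" by (meson coprime_common_divisor_nat dvd_refl)
    then show ?thesis
      using step True a_eq \<open>b < a\<close> by (simp add: euclid_matrix_0 mat2_mult_def mat2_id_def)
  next
    case False
    have "coprime b c"
      unfolding c_def using \<open>coprime a b\<close> by (metis coprime_commute coprime_mod_left_iff "1.prems"(1) not_gr0)
    with "1.IH" "1.prems" False obtain x y where
      E: "euclid_matrix b c = (int b, x, int c, y)" and det: "\<bar>int b * y - int c * x\<bar> = 1"
      and bounds: "1 \<le> x" "0 \<le> y" "2 * y \<le> int c" "2 * x \<le> int b"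
      unfolding c_def by auto
    have qx: "x \<le> int q * x" "2 * (int q * x) \<le> int q * int b"
      using q_ge_1 bounds by (simp_all add: mult_le_cancel_right1)
    have "euclid_matrix a b = (int a, int q * x + y, int b, x)"
      using step E a_eq by (simp add: mat2_mult_def)
    moreover have "\<bar>int a * x - int b * (int q * x + y)\<bar> = 1"
    proof -
      have "int a * x - int b * (int q * x + y) = - (int b * y - int c * x)"
        unfolding a_eq by (simp add: algebra_simps)
      then show ?thesis using det by simp
    qed
    moreover have "1 \<le> int q * x + y" and "0 \<le> x" using bounds qx by linarith+
    moreover have "2 * (int q * x + y) \<le> int a"
      unfolding distrib_left using a_eq bounds qx by linarith
    ultimately show ?thesis
      using bounds by blast
  qed
qed

lemma beta_bezout:
  fixes m n :: int
  assumes "n < m" and "0 < n" and "coprime m n" and "(m, n) \<noteq> (2, 1)"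
  shows "fst (beta m n) * m + snd (beta m n) * n = 1 \<and> 2 * \<bar>snd (beta m n)\<bar> < m"
proof -
  define a b where "a = nat m" and "b = nat n"
  have m_eq: "m = int a" and n_eq: "n = int b" using assms unfolding a_def b_def by auto
  from assms obtain x y where
    E: "euclid_matrix a b = (int a, x, int b, y)" and det: "\<bar>int a * y - int b * x\<bar> = 1"
    and bounds: "1 \<le> x" "0 \<le> y" "2 * y \<le> int b" "2 * x \<le> int a"
    using euclid_matrix_eq[of b a] unfolding m_eq n_eq by auto
  have beta_eq: "beta m n = (y div (int a * y - x * int b), (-x) div (int a * y - x * int b))"
    unfolding beta_def mat2_inv_def mat2_det_def using E a_def b_def by simp
  have "2 * x < int a"
  proof (rule ccontr)
    assume "\<not> 2 * x < int a"
    then have a_2x: "int a = 2 * x" using bounds by simp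
    then have "x * (2 * y - int b) = int a * y - int b * x" by (simp add: algebra_simps)
    then have "x dvd \<bar>int a * y - int b * x\<bar>" unfolding dvd_abs_iff by (metis dvd_triv_left)
    then have "x dvd 1" using det by simp
    then have "m = 2" using a_2x m_eq bounds by (simp add: zdvd_imp_le)
    then show False using assms by simp
  qed
  moreover have "int a * y - x * int b = 1 \<and> beta m n = (y, -x) \<or>
      int a * y - x * int b = -1 \<and> beta m n = (-y, x)"
  proof -
    define d where "d = int a * y - x * int b"
    have "d = 1 \<or> d = -1" using det unfolding d_def by (simp add: mult.commute) linarith
    moreover have "beta m n = (y div d, (-x) div d)" unfolding beta_eq d_def ..
    ultimately show ?thesis unfolding d_def[symmetric] by auto
  qed
  ultimately show ?thesis
    using bounds unfolding m_eq n_eq by (auto simp: algebra_simps)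
qed

lemma bezout_coeffs_unique:
  fixes m n r s r' s' :: int
  assumes "0 < m" and "coprime m n"
    and "r * m + s * n = 1" and "r' * m + s' * n = 1"
    and "2 * \<bar>s\<bar> < m" and "2 * \<bar>s'\<bar> < m"
  shows "r = r' \<and> s = s'"
proof -
  have diff: "(s' - s) * n = (r - r') * m" using assms(3,4) by (simp add: algebra_simps)
  then have "m dvd (s' - s) * n" by simp
  then have "m dvd s' - s" using \<open>coprime m n\<close> by (simp add: coprime_dvd_mult_left_iff)
  moreover have "\<bar>s' - s\<bar> < m" using assms(5,6) by linarith
  ultimately have "s = s'" using dvd_imp_le_int[of "s' - s" m] by fastforce
  with diff \<open>0 < m\<close> show ?thesis by simp
qed

lemma beta_eq_iff:
  fixes m n r s :: int
  assumes "n < m" and "0 < n" and "coprime m n" and "(m, n) \<noteq> (2, 1)"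
  shows "(r, s) = beta m n \<longleftrightarrow> r * m + s * n = 1 \<and> 2 * \<bar>s\<bar> < m"
proof
  assume "(r, s) = beta m n"
  then show "r * m + s * n = 1 \<and> 2 * \<bar>s\<bar> < m"
    using beta_bezout[OF assms] by (metis fst_conv snd_conv)
next
  assume "r * m + s * n = 1 \<and> 2 * \<bar>s\<bar> < m"
  then have "r = fst (beta m n) \<and> s = snd (beta m n)"
    using beta_bezout[OF assms] assms by (intro bezout_coeffs_unique[of m n]) auto
  then show "(r, s) = beta m n" by simp
qed

lemma bezout_bound_shift_iff:
  fixes m n r s :: int
  assumes "n < m" and "0 < n" and "(m, n) \<noteq> (2, 1)" and bezout: "r * m + s * n = 1"
  shows "2 * \<bar>s\<bar> < m \<longleftrightarrow> 2 * \<bar>r + 2 * s\<bar> < 2 * m - n"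
proof -
  define k t where "k = 2 * m - n" and "t = r + 2 * s"
  have "3 \<le> k" and "0 < m" using assms unfolding k_def by auto
  have "m * (2 * \<bar>t\<bar>) = \<bar>2 * (m * t)\<bar>" using \<open>0 < m\<close> by (simp add: abs_mult)
  also have "2 * (m * t) = 2 + 2 * s * k"
    unfolding t_def k_def using bezout by (simp add: algebra_simps)
  finally have mt: "m * (2 * \<bar>t\<bar>) = \<bar>2 + 2 * s * k\<bar>" .
  have sk: "\<bar>2 * s * k\<bar> = 2 * \<bar>s\<bar> * k" using \<open>3 \<le> k\<close> by (simp add: abs_mult)
  have "2 * \<bar>s\<bar> \<noteq> m"
  proof
    assume "2 * \<bar>s\<bar> = m"
    then have "2 * s = m \<or> 2 * s = - m" by linarith
    moreover have "2 * r * m + (2 * s) * n = 2" using bezout by (simp add: algebra_simps)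
    ultimately have "m * (2 * r + n) = 2 \<or> m * (2 * r - n) = 2"
      by (elim disjE) (simp_all add: algebra_simps)
    then have "m dvd 2" unfolding dvd_def by metis
    then show False using assms by (auto dest: zdvd_imp_le)
  qed
  then consider "2 * \<bar>s\<bar> \<le> m - 1" | "m + 1 \<le> 2 * \<bar>s\<bar>" by linarith
  then show ?thesis
  proof cases
    case 1
    then have "2 * \<bar>s\<bar> * k \<le> (m - 1) * k" using \<open>3 \<le> k\<close> by (simp add: mult_right_mono)
    then have "m * (2 * \<bar>t\<bar>) < m * k" using mt sk \<open>3 \<le> k\<close> by (simp add: algebra_simps)
    then show ?thesis using 1 \<open>0 < m\<close> unfolding k_def t_def by simp
  next
    case 2
    then have "(m + 1) * k \<le> 2 * \<bar>s\<bar> * k" using \<open>3 \<le> k\<close> by (simp add: mult_right_mono)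
    then have "m * k \<le> m * (2 * \<bar>t\<bar>)" using mt sk \<open>3 \<le> k\<close> by (simp add: algebra_simps)
    then show ?thesis using 2 \<open>0 < m\<close> unfolding k_def t_def by simp
  qed
qed

lemma coprime_two_mult_diff:
  fixes m n :: int
  assumes "coprime m n"
  shows "coprime (2 * m - n) m"
proof (rule coprimeI)
  fix c assume "c dvd 2 * m - n" and "c dvd m"
  then have "c dvd 2 * m - (2 * m - n)" by (blast intro: dvd_diff dvd_mult)
  then have "c dvd n" by simp
  with \<open>c dvd m\<close> show "is_unit c" using assms coprime_common_divisor by blast
qed

theorem lemma2p7:
  fixes m n r s :: int
  assumes "m > n" and "n > 0" and "coprime m n" and "(m, n) \<noteq> (2, 1)"
  shows "(r, s) = beta m n \<longleftrightarrow> (- s, r + 2 * s) = beta (2 * m - n) m"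
proof -
  have "(- s, r + 2 * s) = beta (2 * m - n) m \<longleftrightarrow>
      (- s) * (2 * m - n) + (r + 2 * s) * m = 1 \<and> 2 * \<bar>r + 2 * s\<bar> < 2 * m - n"
    using assms coprime_two_mult_diff[OF assms(3)] by (intro beta_eq_iff) auto
  moreover have "(- s) * (2 * m - n) + (r + 2 * s) * m = r * m + s * n"
    by (simp add: algebra_simps)
  ultimately show ?thesis
    using beta_eq_iff[OF assms] bezout_bound_shift_iff[OF assms(1,2,4)] by auto
qed

end
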